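(* For $n\in\mathcal{N}_{z_q}$, let $L_n=\{(x_\gamma,y_\gamma):\gamma\in\Gamma_{z_q,n}\}$ and \[ \mathcal{L}_n=\{(x,y)\in\mathbb{R}^2:\ x^2+y^2=n^2-4\lambda^4,\ y\equiv n \pmod{2\lambda^2},\ x\equiv 0\pmod{\lambda}\}. \] Then $L_n=\mathcal{L}_n$, and $|\mathcal{L}_n|=2c_n\,r_K(n^2-4\lambda^4)$, where $c_n=1/2$ if ($q$ even and $2\mid n$) or ($q$ odd and $q\mid 2n$), and $c_n=1/4$ otherwise.
   Context: Let $q\in\{3,4,7,8,11,19,43,67,163\}$, $K$ the imaginary quadratic field of discriminant $-q$ (class number one), ring of integers $\mathcal{O}_K$; $r_K(M)$ is the number of elements of $\mathcal{O}_K$ of norm $M$. Let $z_q=\mu+i\lambda$ with $\mu=0$ if $q\in\{4,8\}$, $\mu=1/2$ otherwise, $\lambda=\sqrt q/2$. $\mathbb{H}$ is the upper half-plane with hyperbolic distance $\rho$, $\cosh\rho(z,w)=1+\frac{|z-w|^2}{2\,\mathrm{Im}(z)\mathrm{Im}(w)}$; $\Gamma=\mathrm{PSL}(2,\mathbb{Z})$; $\mathcal{R}(\gamma;z_q)=2\lambda^2\cosh\rho(z_q,\gamma z_q)$, $\mathcal{N}_{z_q}=\{\mathcal{R}(\gamma;z_q):\gamma\in\Gamma\}$, $\Gamma_{z_q,n}=\{\gamma:\mathcal{R}(\gamma;z_q)=n\}$. Congruences $y\equiv n\pmod{2\lambda^2}$, $x\equiv0\pmod\lambda$ mean $(y-n)/(2\lambda^2)\in\mathbb{Z}$,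 $x/\lambda\in\mathbb{Z}$. For $\gamma=\begin{pmatrix}a&b\\c&d\end{pmatrix}$ with $n=\mathcal{R}(\gamma;z_q)$: $x_\gamma=2\lambda((\mu a+b)(\mu c+d)+\lambda^2ac-\mu((\mu c+d)^2+\lambda^2c^2))$, $y_\gamma=n-2\lambda^2((\mu c+d)^2+\lambda^2c^2)$. *)

theory Defs
  imports Complex_Main
begin

text \<open>The admissible discriminants: K = Q(sqrt(-q)) has class number one.\<close>
definition admissible_q :: "nat set" where
  "admissible_q = {3, 4, 7, 8, 11, 19, 43, 67, 163}"

definition mu_q :: "nat \<Rightarrow> real" where
  "mu_q q = (if q \<in> {4, 8} then 0 else 1/2)"

definition lam_q :: "nat \<Rightarrow> real" where
  "lam_q q = sqrt (real q) / 2"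

definition z_q :: "nat \<Rightarrow> complex" where
  "z_q q = Complex (mu_q q) (lam_q q)"

text \<open>Ring of integers O_K = Z + Z z_q (z_q is (1+sqrt(-q))/2, i, or i sqrt 2);
  the norm of a + b z_q is its squared absolute value.
  r_K(M) = number of elements of O_K of norm M.\<close>
definition O_K :: "nat \<Rightarrow> complex set" where
  "O_K q = {of_int a + of_int b * z_q q | a b. True}"

definition r_K :: "nat \<Rightarrow> real \<Rightarrow> nat" where
  "r_K q M = card {\<alpha> \<in> O_K q. (cmod \<alpha>)\<^sup>2 = M}"

text \<open>SL(2,Z) as integer quadruples (a,b,c,d) with ad - bc = 1; elements of
  PSL(2,Z) are their classes modulo sign.\<close>
definition SL2Z :: "(int \<times> int \<times> int \<times> int) set" where
  "SL2Z = {(a, b, c, d). a * d - b * c = 1}"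

definition moebius :: "int \<times> int \<times> int \<times> int \<Rightarrow> complex \<Rightarrow> complex" where
  "moebius g z = (case g of (a, b, c, d) \<Rightarrow>
      (of_int a * z + of_int b) / (of_int c * z + of_int d))"

definition cosh_rho :: "complex \<Rightarrow> complex \<Rightarrow> real" where
  "cosh_rho z w = 1 + (cmod (z - w))\<^sup>2 / (2 * Im z * Im w)"

definition RR :: "nat \<Rightarrow> int \<times> int \<times> int \<times> int \<Rightarrow> real" where
  "RR q g = 2 * (lam_q q)\<^sup>2 * cosh_rho (z_q q) (moebius g (z_q q))"

definition N_z :: "nat \<Rightarrow> real set" where
  "N_z q = {RR q g | g. g \<in> SL2Z}"

definition Gamma_n :: "nat \<Rightarrow> real \<Rightarrow> (int \<times> int \<times> int \<times> int) set" where
  "Gamma_n q n = {g \<in> SL2Z. RR q g = n}"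

definition x_g :: "nat \<Rightarrow> int \<times> int \<times> int \<times> int \<Rightarrow> real" where
  "x_g q g = (case g of (a, b, c, d) \<Rightarrow>
     (let m = mu_q q; l = lam_q q in
      2 * l * ((m * a + b) * (m * c + d) + l\<^sup>2 * a * c
                 - m * ((m * c + d)\<^sup>2 + l\<^sup>2 * c\<^sup>2))))"

definition y_g :: "nat \<Rightarrow> int \<times> int \<times> int \<times> int \<Rightarrow> real" where
  "y_g q g = (case g of (a, b, c, d) \<Rightarrow>
     (let m = mu_q q; l = lam_q q in
      RR q g - 2 * l\<^sup>2 * ((m * c + d)\<^sup>2 + l\<^sup>2 * c\<^sup>2)))"

definition L_n :: "nat \<Rightarrow> real \<Rightarrow> (real \<times> real) set" where
  "L_n q n = (\<lambda>g. (x_g q g, y_g q g)) ` Gamma_n q n"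

definition calL_n :: "nat \<Rightarrow> real \<Rightarrow> (real \<times> real) set" where
  "calL_n q n = {(x, y). x\<^sup>2 + y\<^sup>2 = n\<^sup>2 - 4 * (lam_q q)^4
      \<and> (y - n) / (2 * (lam_q q)\<^sup>2) \<in> \<int> \<and> x / lam_q q \<in> \<int>}"

text \<open>c_n; divisibility for real n is read as in the congruence convention:
  "2 divides n" means n/2 in Z, "q divides 2n" means 2n/q in Z.\<close>
definition c_n :: "nat \<Rightarrow> real \<Rightarrow> real" where
  "c_n q n = (if (even q \<and> n / 2 \<in> \<int>) \<or> (odd q \<and> 2 * n / real q \<in> \<int>)
              then 1/2 else 1/4)"

end

theory Submission
  imports Defs "HOL-Computational_Algebra.Primes"
begin

(* Write z_q = t/2 + i lambda with t in {0, 1}; then z_q is a root of X^2 - t X + N with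
   q = 4 N - t^2, and |x z_q + y|^2 is the principal form F = (N, t, 1) of discriminant -q.
   For gamma in SL(2,Z) the quantity n = 2 lambda^2 cosh rho(z_q, gamma z_q) is linear in the
   coefficients (A, B, C) of the transformed form F o gamma: 2 n = 2 N C + 2 A - t B, while
   x_gamma = lambda (B - t C) and y_gamma = n - (q/2) C.  Invariance of the discriminant,
   B^2 - 4 A C = -q, becomes the circle equation, and the congruences can be read off.
   Conversely a lattice point of the circle yields a positive definite integral form of
   discriminant -q, which is F o gamma for some gamma because the class number is one.
   Finally (a, b) |-> (lambda b, n + 2 lambda^2 (2 a + t b - 2 n) / q) identifies calL_n with
   the a + b z_q of norm n^2 - 4 lambda^4 satisfying 2 a + t b = 2 n (mod q), and an involution
   of the norm solutions shows that this congruence holds either always or for exactly half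
   of them. *)

text \<open>Trace and norm of z_q: z_q is a root of X^2 - tr_q q X + nr_q q.\<close>

definition tr_q :: "nat \<Rightarrow> int" where
  "tr_q q = (if q \<in> {4, 8} then 0 else 1)"

definition nr_q :: "nat \<Rightarrow> int" where
  "nr_q q = (int q + tr_q q) div 4"

lemma admissible_q_cases:
  "q \<in> admissible_q \<Longrightarrow> q = 3 \<or> q = 4 \<or> q = 7 \<or> q = 8 \<or> q = 11 \<or> q = 19 \<or> q = 43 \<or> q = 67 \<or> q = 163"
  by (auto simp: admissible_q_def)

lemma admissible_q_pos: "q \<in> admissible_q \<Longrightarrow> q > 0"
  by (auto simp: admissible_q_def)

lemma tr_q_cases: "tr_q q = 0 \<or> tr_q q = 1"
  by (simp add: tr_q_def)

lemma odd_iff_tr_q: "q \<in> admissible_q \<Longrightarrow> odd q \<longleftrightarrow> tr_q q = 1"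
  by (auto simp: admissible_q_def tr_q_def)

lemma disc_nr_tr_q: "q \<in> admissible_q \<Longrightarrow> int q = 4 * nr_q q - (tr_q q)\<^sup>2"
  by (auto simp: admissible_q_def nr_q_def tr_q_def)

lemma lam_q_sq: "(lam_q q)\<^sup>2 = real q / 4"
  by (simp add: lam_q_def power_divide)

lemma lam_q_pos: "q > 0 \<Longrightarrow> lam_q q > 0"
  by (simp add: lam_q_def)

lemma mu_q_eq: "mu_q q = of_int (tr_q q) / 2"
  by (simp add: mu_q_def tr_q_def)

lemma z_q_eq: "z_q q = Complex (of_int (tr_q q) / 2) (lam_q q)"
  by (simp add: z_q_def mu_q_def tr_q_def)

text \<open>(A, B, C) is the binary quadratic form A x^2 + B x y + C y^2, and form_act F (a, b, c, d)
  is the form F(a x + c y, b x + d y).\<close>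

fun form_act :: "int \<times> int \<times> int \<Rightarrow> int \<times> int \<times> int \<times> int \<Rightarrow> int \<times> int \<times> int" where
  "form_act (A, B, C) (a, b, c, d) =
     (A*a\<^sup>2 + B*a*b + C*b\<^sup>2, 2*A*a*c + B*(a*d + b*c) + 2*C*b*d, A*c\<^sup>2 + B*c*d + C*d\<^sup>2)"

fun form_disc :: "int \<times> int \<times> int \<Rightarrow> int" where
  "form_disc (A, B, C) = B\<^sup>2 - 4*A*C"

definition principal_form :: "nat \<Rightarrow> int \<times> int \<times> int" where
  "principal_form q = (nr_q q, tr_q q, 1)"

fun sl2_mult :: "int \<times> int \<times> int \<times> int \<Rightarrow> int \<times> int \<times> int \<times> int \<Rightarrow> int \<times> int \<times> int \<times> int" where
  "sl2_mult (a, b, c, d) (e, f, u, v) = (a*e + b*u, a*f + b*v, c*e + d*u, c*f + d*v)"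

fun sl2_inv :: "int \<times> int \<times> int \<times> int \<Rightarrow> int \<times> int \<times> int \<times> int" where
  "sl2_inv (a, b, c, d) = (d, -b, -c, a)"

lemma form_act_sl2_mult: "form_act (form_act F g) h = form_act F (sl2_mult h g)"
  by (cases F; cases g; cases h) (simp add: power2_eq_square algebra_simps)

lemma form_act_one: "form_act F (1, 0, 0, 1) = F"
  by (cases F) simp

lemma sl2_inv_mult: "g \<in> SL2Z \<Longrightarrow> sl2_mult (sl2_inv g) g = (1, 0, 0, 1)"
  by (cases g) (auto simp: SL2Z_def algebra_simps)

lemma sl2_inv_SL2Z: "g \<in> SL2Z \<Longrightarrow> sl2_inv g \<in> SL2Z"
  by (cases g) (auto simp: SL2Z_def algebra_simps)

lemma sl2_mult_SL2Z: "g \<in> SL2Z \<Longrightarrow> h \<in> SL2Z \<Longrightarrow> sl2_mult g h \<in> SL2Z"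
proof (cases g; cases h)
  fix a b c d e f u v
  assume "g \<in> SL2Z" "h \<in> SL2Z" and gh: "g = (a, b, c, d)" "h = (e, f, u, v)"
  then have "a*d - b*c = 1" "e*v - f*u = 1" by (auto simp: SL2Z_def)
  moreover have "(a*e + b*u)*(c*f + d*v) - (a*f + b*v)*(c*e + d*u) = (a*d - b*c)*(e*v - f*u)"
    by (simp add: algebra_simps)
  ultimately show ?thesis using gh by (simp add: SL2Z_def)
qed

lemma form_disc_form_act: "g \<in> SL2Z \<Longrightarrow> form_disc (form_act F g) = form_disc F"
proof (cases F; cases g)
  fix A B C a b c d
  assume "g \<in> SL2Z" and Fg: "F = (A, B, C)" "g = (a, b, c, d)"
  then have "a*d - b*c = 1" by (simp add: SL2Z_def)
  moreover have "form_disc (form_act F g) = form_disc F * (a*d - b*c)\<^sup>2"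
    using Fg by (simp add: power2_eq_square algebra_simps)
  ultimately show ?thesis by simp
qed

lemma form_disc_principal_form: "q \<in> admissible_q \<Longrightarrow> form_disc (principal_form q) = - int q"
  using disc_nr_tr_q by (simp add: principal_form_def)

lemma disc_form_act_principal:
  assumes "q \<in> admissible_q" and "g \<in> SL2Z" and "form_act (principal_form q) g = (A, B, C)"
  shows "B\<^sup>2 - 4*A*C = - int q"
  using form_disc_form_act[OF assms(2), of "principal_form q"] form_disc_principal_form[OF assms(1)] assms(3)
  by simp

lemma even_middle_coeff:
  fixes A B C :: int
  assumes q: "q \<in> admissible_q" and disc: "B\<^sup>2 - 4*A*C = - int q"
  shows "even (B + tr_q q)"
proof -
  define t where "t = tr_q q"
  have e: "(B - t) * (B + t) = 4 * (A*C - nr_q q)"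
    using disc disc_nr_tr_q[OF q] by (simp add: t_def algebra_simps power2_eq_square)
  have "even ((B - t) * (B + t))" unfolding e by simp
  then have "even (B - t) \<or> even (B + t)" by simp
  moreover have "B + t = (B - t) + 2*t" by simp
  ultimately show ?thesis unfolding t_def by (metis even_add even_mult_iff even_numeral)
qed

text \<open>Class number one in its reduction-theoretic form: for the admissible q the only reduced
  positive definite form of discriminant -q is the principal one, which has A = 1.  Since a
  reduced form has 3 A^2 \<le> q, this is a finite check.\<close>

lemma reduced_form_leading_coeff:
  fixes A B C :: int
  assumes q: "q \<in> admissible_q" and BA: "\<bar>B\<bar> \<le> A" and AC: "A \<le> C"
    and disc: "B\<^sup>2 - 4*A*C = - int q"
  shows "A \<le> 1"
proof (rule ccontr)
  assume "\<not> A \<le> 1"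
  then have A2: "2 \<le> A" by simp
  have "\<bar>B\<bar> \<le> \<bar>A\<bar>" using BA A2 by simp
  then have "B\<^sup>2 \<le> A\<^sup>2" using abs_le_square_iff by blast
  moreover have "A*A \<le> A*C" using AC A2 by (simp add: mult_left_mono)
  ultimately have h3: "3*A\<^sup>2 \<le> int q" using disc by (simp add: power2_eq_square)
  have A7: "A \<le> 7"
  proof (rule ccontr)
    assume "\<not> A \<le> 7"
    then have "8*8 \<le> A*A" by (intro mult_mono) auto
    moreover have "q \<le> 163" using admissible_q_cases[OF q] by auto
    ultimately show False using h3 by (simp add: power2_eq_square)
  qed
  define a where "a = nat A"
  define b where "b = nat \<bar>B\<bar>"
  have Aa: "A = int a" and Bb: "B\<^sup>2 = int (b\<^sup>2)" using A2 by (simp_all add: a_def b_def)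
  have "int (b\<^sup>2 + q) = int (4*a) * C" using disc Aa Bb by simp
  then have "int (4*a) dvd int (b\<^sup>2 + q)" by simp
  then have "(4*a) dvd (b\<^sup>2 + q)" by (simp only: int_dvd_int_iff)
  moreover have "3*a\<^sup>2 \<le> q" using h3 Aa by (metis of_nat_le_iff of_nat_mult of_nat_numeral of_nat_power)
  moreover have "b \<le> a" using BA Aa by (simp add: b_def)
  moreover have "a \<in> set [2,3,4,5,6,7]" using A2 A7 Aa by auto
  moreover have "b \<in> set [0,1,2,3,4,5,6,7]" using \<open>b \<le> a\<close> \<open>a \<in> set [2,3,4,5,6,7]\<close> by auto
  moreover have "q \<in> set [3,4,7,8,11,19,43,67,163]" using admissible_q_cases[OF q] by auto
  moreover have "list_all (\<lambda>q. list_all (\<lambda>a. list_all (\<lambda>b. b \<le> a \<longrightarrow> 3*a\<^sup>2 \<le> q \<longrightarrow> \<not> (4*a) dvd (b\<^sup>2 + q))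
      [0,1,2,3,4,5,6,7::nat]) [2,3,4,5,6,7]) [3,4,7,8,11,19,43,67,163]"
    by simp
  ultimately show False unfolding list_all_iff by blast
qed

lemma principal_form_orbit_leading_one:
  fixes B C :: int
  assumes q: "q \<in> admissible_q" and disc: "B\<^sup>2 - 4*C = - int q"
  shows "\<exists>g\<in>SL2Z. form_act (principal_form q) g = (1, B, C)"
proof -
  define t where "t = tr_q q"
  define N where "N = nr_q q"
  have qq: "int q = 4*N - t\<^sup>2" using disc_nr_tr_q[OF q] by (simp add: N_def t_def)
  have "even (B + t)" using even_middle_coeff[OF q, of B 1 C] disc by (simp add: t_def)
  then obtain d where d: "B + t = 2*d" by (metis dvd_def)
  have "4*C = B\<^sup>2 + int q" using disc by simp
  also have "\<dots> = (2*d - t)\<^sup>2 + (4*N - t\<^sup>2)" using d qq by (simp flip: d)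
  also have "\<dots> = 4*(N - t*d + d\<^sup>2)" by (simp add: algebra_simps power2_eq_square)
  finally have Cd: "C = N - t*d + d\<^sup>2" by simp
  have "(0, 1, -1, d) \<in> SL2Z" by (simp add: SL2Z_def)
  moreover have "form_act (principal_form q) (0, 1, -1, d) = (1, B, C)"
    using d Cd by (simp add: principal_form_def N_def[symmetric] t_def[symmetric] algebra_simps power2_eq_square)
  ultimately show ?thesis by blast
qed

lemma reduce_leading_coeff:
  fixes A B C :: int
  assumes q: "q \<in> admissible_q" and A2: "2 \<le> A" and disc: "B\<^sup>2 - 4*A*C = - int q"
  obtains D B' C' where "D \<in> SL2Z" "form_act (A, B, C) D = (C', B', A)" "0 < C'" "C' < A"
proof -
  define k where "k = (A - B) div (2*A)"
  define B1 where "B1 = B + 2*k*A"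
  define C1 where "C1 = A*k\<^sup>2 + B*k + C"
  have T: "form_act (A, B, C) (1, 0, k, 1) = (A, B1, C1)"
    unfolding B1_def C1_def by (simp add: power2_eq_square algebra_simps)
  have TS: "(1, 0, k, 1) \<in> SL2Z" by (simp add: SL2Z_def)
  have d1: "B1\<^sup>2 - 4*A*C1 = - int q"
    using form_disc_form_act[OF TS, of "(A, B, C)"] disc T by simp
  have "B1 = A - (A - B) mod (2*A)"
    using div_mult_mod_eq[of "A - B" "2*A"] by (simp add: B1_def k_def algebra_simps)
  moreover have "0 \<le> (A - B) mod (2*A)" "(A - B) mod (2*A) < 2*A" using A2 by simp_all
  ultimately have B1A: "\<bar>B1\<bar> \<le> A" by linarith
  have C1A: "C1 < A"
  proof (rule ccontr)
    assume "\<not> C1 < A"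
    then have "A \<le> 1" using reduced_form_leading_coeff[OF q B1A _ d1] by simp
    then show False using A2 by simp
  qed
  have "0 \<le> B1\<^sup>2" by simp
  then have "0 < A*C1" using d1 admissible_q_pos[OF q] by linarith
  then have C1p: "0 < C1" using A2 by (simp add: zero_less_mult_iff)
  define S where "S = ((0, 1, -1, 0) :: int \<times> int \<times> int \<times> int)"
  have "S \<in> SL2Z" by (simp add: S_def SL2Z_def)
  then have DS: "sl2_mult S (1, 0, k, 1) \<in> SL2Z" using sl2_mult_SL2Z[OF _ TS] by blast
  have "form_act (A, B1, C1) S = (C1, -B1, A)" by (simp add: S_def)
  then have "form_act (A, B, C) (sl2_mult S (1, 0, k, 1)) = (C1, -B1, A)"
    using T form_act_sl2_mult[of "(A, B, C)" "(1, 0, k, 1)" S] by simp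
  then show ?thesis using that DS C1p C1A by blast
qed

lemma class_number_one:
  assumes q: "q \<in> admissible_q"
  shows "0 < A \<Longrightarrow> B\<^sup>2 - 4*A*C = - int q \<Longrightarrow> \<exists>g\<in>SL2Z. form_act (principal_form q) g = (A, B, C)"
proof (induction "nat A" arbitrary: A B C rule: less_induct)
  case less
  show ?case
  proof (cases "A = 1")
    case True
    then show ?thesis using principal_form_orbit_leading_one[OF q] less.prems by simp
  next
    case False
    then have "2 \<le> A" using less.prems by simp
    then obtain D B' C' where D: "D \<in> SL2Z" "form_act (A, B, C) D = (C', B', A)"
      and C': "0 < C'" "C' < A"
      using reduce_leading_coeff[OF q _ less.prems(2)] by blast
    have "B'\<^sup>2 - 4*C'*A = - int q"
      using form_disc_form_act[OF D(1), of "(A, B, C)"] less.prems(2) D(2) by simp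
    moreover have "nat C' < nat A" using C' by simp
    ultimately obtain g where g: "g \<in> SL2Z" "form_act (principal_form q) g = (C', B', A)"
      using less.hyps C'(1) by blast
    have "form_act (principal_form q) (sl2_mult (sl2_inv D) g) = (A, B, C)"
      by (metis form_act_sl2_mult g(2) D(2) sl2_inv_mult[OF D(1)] form_act_one)
    moreover have "sl2_mult (sl2_inv D) g \<in> SL2Z" using sl2_mult_SL2Z sl2_inv_SL2Z D(1) g(1) by blast
    ultimately show ?thesis by blast
  qed
qed

lemma cosh_rho_moebius:
  fixes a b c d :: int and z :: complex
  assumes det: "a*d - b*c = 1" and Imz: "Im z > 0"
  shows "2 * (Im z)\<^sup>2 * cosh_rho z (moebius (a, b, c, d) z)
           = 2 * (Im z)\<^sup>2 + (cmod (z * (of_int c * z + of_int d) - (of_int a * z + of_int b)))\<^sup>2"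
proof -
  obtain s l where z: "z = Complex s l" by (metis complex.exhaust)
  define D where "D = of_int c * z + of_int d"
  define E where "E = z * D - (of_int a * z + of_int b)"
  have l: "l > 0" using Imz z by simp
  have ReD: "Re D = c*s + d" and ImD: "Im D = c*l" by (simp_all add: D_def z)
  have D0: "D \<noteq> 0"
  proof
    assume "D = 0"
    then have "c = 0" "d = 0" using ReD ImD l by auto
    then show False using det by simp
  qed
  have w: "moebius (a, b, c, d) z = (of_int a * z + of_int b) / D" by (simp add: moebius_def D_def)
  have Imw: "Im (moebius (a, b, c, d) z) = l / (cmod D)\<^sup>2"
  proof -
    have "Im ((of_int a * z + of_int b) / D)
        = (Re D * Im (of_int a * z + of_int b) - Im D * Re (of_int a * z + of_int b)) / (cmod D)\<^sup>2"
      by (simp add: Im_divide cmod_power2)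
    also have "Re D * Im (of_int a * z + of_int b) - Im D * Re (of_int a * z + of_int b) = l * (a*d - b*c)"
      by (simp add: ReD ImD z algebra_simps)
    finally show ?thesis using w det by simp
  qed
  have "z - moebius (a, b, c, d) z = E / D"
    using D0 by (simp add: w E_def field_simps)
  then have "(cmod (z - moebius (a, b, c, d) z))\<^sup>2 = (cmod E)\<^sup>2 / (cmod D)\<^sup>2"
    by (simp add: norm_divide power_divide)
  then have "cosh_rho z (moebius (a, b, c, d) z) = 1 + ((cmod E)\<^sup>2 / (cmod D)\<^sup>2) / (2 * l * (l / (cmod D)\<^sup>2))"
    unfolding cosh_rho_def Imw by (simp add: z)
  also have "\<dots> = 1 + (cmod E)\<^sup>2 / (2*l\<^sup>2)"
    using l D0 by (simp add: field_simps power2_eq_square)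
  finally show ?thesis using l by (simp add: z E_def D_def field_simps)
qed

context
  fixes q :: nat and a b c d A B C :: int
  assumes q: "q \<in> admissible_q"
    and F: "form_act (principal_form q) (a, b, c, d) = (A, B, C)"
begin

private lemma form_coeffs:
  "A = nr_q q * a\<^sup>2 + tr_q q * a * b + b\<^sup>2"
  "B = 2 * nr_q q * a * c + tr_q q * (a*d + b*c) + 2 * b * d"
  "C = nr_q q * c\<^sup>2 + tr_q q * c * d + d\<^sup>2"
  using F by (auto simp: principal_form_def)

private lemma lam_sq_nr_tr:
  "(lam_q q)\<^sup>2 * 4 = 4 * real_of_int (nr_q q) - (real_of_int (tr_q q))\<^sup>2"
proof -
  have "real_of_int (int q) = real_of_int (4 * nr_q q - (tr_q q)\<^sup>2)"
    using disc_nr_tr_q[OF q] by simp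
  then show ?thesis by (simp add: lam_q_sq)
qed

lemma RR_form_act:
  assumes det: "a*d - b*c = 1"
  shows "2 * RR q (a, b, c, d) = 2 * nr_q q * C + 2 * A - tr_q q * B"
proof -
  have key: "4 * l\<^sup>2 + ((t * (c * t / 2 + d) / 2 - l * (c * l) - (a * t / 2 + b))\<^sup>2 * 2 +
      (t * (c * l) / 2 + l * (c * t / 2 + d) - a * l)\<^sup>2 * 2) =
      2 * N * (N * c\<^sup>2 + t * c * d + d\<^sup>2) + (2 * (N * a\<^sup>2) + 2 * (t * a * b) + 2 * b\<^sup>2)
      - t * (2 * N * a * c + t * (a * d + b * c) + 2 * b * d)"
    if "l\<^sup>2 * 4 = 4 * N - t\<^sup>2" "a*d - b*c = 1" for a b c d t N l :: real
    using that by (simp add: field_simps power2_eq_square) algebra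
  have detR: "real_of_int a * real_of_int d - real_of_int b * real_of_int c = 1"
    using det by (metis of_int_1 of_int_diff of_int_mult)
  have "RR q (a, b, c, d) = 2 * (lam_q q)\<^sup>2
      + (cmod (z_q q * (of_int c * z_q q + of_int d) - (of_int a * z_q q + of_int b)))\<^sup>2"
    using cosh_rho_moebius[OF det, of "z_q q"] lam_q_pos[OF admissible_q_pos[OF q]]
    by (simp add: RR_def z_q_eq)
  then show ?thesis
    unfolding form_coeffs using key[OF lam_sq_nr_tr detR] by (simp add: z_q_eq cmod_power2)
qed

lemma x_g_form_act: "x_g q (a, b, c, d) = lam_q q * (B - tr_q q * C)"
proof -
  have key: "2 * ((t * a / 2 + b) * (t * c / 2 + d)) + 2 * (l\<^sup>2 * a * c) - t * ((t * c / 2 + d)\<^sup>2 + l\<^sup>2 * c\<^sup>2) =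
      2 * N * a * c + t * (a * d + b * c) + 2 * b * d - t * (N * c\<^sup>2 + t * c * d + d\<^sup>2)"
    if "l\<^sup>2 * 4 = 4 * N - t\<^sup>2" for a b c d t N l :: real
    using that by (simp add: field_simps power2_eq_square) algebra
  show ?thesis
    unfolding x_g_def form_coeffs Let_def mu_q_eq using key[OF lam_sq_nr_tr] by simp
qed

lemma y_g_form_act: "y_g q (a, b, c, d) = RR q (a, b, c, d) - real q / 2 * C"
proof -
  have key: "4 * (l\<^sup>2 * ((t * c / 2 + d)\<^sup>2 + l\<^sup>2 * c\<^sup>2)) = (4 * N - t\<^sup>2) * (N * c\<^sup>2 + t * c * d + d\<^sup>2)"
    if "l\<^sup>2 * 4 = 4 * N - t\<^sup>2" for c d t N l :: real
    using that by (simp add: field_simps power2_eq_square) algebra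
  have "real q = 4 * nr_q q - (tr_q q)\<^sup>2"
    using lam_sq_nr_tr by (simp add: lam_q_sq)
  then show ?thesis
    unfolding y_g_def form_coeffs Let_def mu_q_eq using key[OF lam_sq_nr_tr] by simp
qed

end

lemma RR_pos: "q > 0 \<Longrightarrow> g \<in> SL2Z \<Longrightarrow> RR q g > 0"
proof (cases g)
  case (fields a b c d)
  assume "q > 0" "g \<in> SL2Z"
  then have det: "a*d - b*c = 1" and Imz: "Im (z_q q) > 0"
    using fields lam_q_pos by (auto simp: SL2Z_def z_q_eq)
  have "RR q g = 2 * (Im (z_q q))\<^sup>2 * cosh_rho (z_q q) (moebius (a, b, c, d) (z_q q))"
    by (simp add: RR_def fields z_q_eq)
  also have "\<dots> = 2 * (Im (z_q q))\<^sup>2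
      + (cmod (z_q q * (of_int c * z_q q + of_int d) - (of_int a * z_q q + of_int b)))\<^sup>2"
    by (rule cosh_rho_moebius[OF det Imz])
  finally show ?thesis using Imz by (simp add: add_pos_nonneg)
qed

lemma level_of_N_z:
  assumes q: "q \<in> admissible_q" and n: "n \<in> N_z q"
  obtains m where "2 * n = of_int m" "0 < m" "even (m - tr_q q)"
proof -
  obtain a b c d where g: "(a, b, c, d) \<in> SL2Z" and n: "n = RR q (a, b, c, d)"
    using n by (auto simp: N_z_def)
  obtain A B C where F: "form_act (principal_form q) (a, b, c, d) = (A, B, C)"
    by (metis prod_cases3)
  define t where "t = tr_q q"
  define m where "m = 2 * nr_q q * C + 2 * A - t * B"
  have nm: "2 * n = of_int m"
    using RR_form_act[OF q F] g n by (simp add: SL2Z_def m_def t_def)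
  moreover have "0 < m"
    using RR_pos[OF admissible_q_pos[OF q] g] n nm by simp
  moreover have "even (m - t)"
  proof -
    have "B\<^sup>2 - 4*A*C = - int q" using disc_form_act_principal[OF q g F] .
    then have "even (B + t)" using even_middle_coeff[OF q] by (simp add: t_def)
    moreover have "t * t = t" using tr_q_cases[of q] by (auto simp: t_def)
    moreover have "m - t = 2 * (nr_q q * C + A) - t * (B + t) + (t * t - t)"
      by (simp add: m_def algebra_simps)
    ultimately show ?thesis by simp
  qed
  ultimately show ?thesis using that by (simp add: t_def)
qed

lemma mem_calL_n_iff:
  assumes q0: "q > 0" and nm: "2 * n = of_int m"
  shows "(x, y) \<in> calL_n q n \<longleftrightarrow> (\<exists>X Y. x = lam_q q * of_int X \<and> y = n + 2 * (lam_q q)\<^sup>2 * of_int Y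
           \<and> X\<^sup>2 + 2*m*Y + int q*Y\<^sup>2 + int q = 0)"
proof -
  define l where "l = lam_q q"
  have l4: "4 * l\<^sup>2 = real q" unfolding l_def lam_q_sq by simp
  have l0: "l > 0" using lam_q_pos[OF q0] by (simp add: l_def)
  have key: "x\<^sup>2 + y\<^sup>2 - (n\<^sup>2 - 4 * l^4)
      = l\<^sup>2 * real_of_int (X\<^sup>2 + 2*m*Y + int q*Y\<^sup>2 + int q)"
    if "x = l * of_int X" "y = n + 2 * l\<^sup>2 * of_int Y" for X Y
  proof -
    have "x\<^sup>2 + y\<^sup>2 - (n\<^sup>2 - 4 * l^4)
        = l\<^sup>2 * ((of_int X)\<^sup>2 + 2 * (2 * n) * of_int Y + (4 * l\<^sup>2) * (of_int Y)\<^sup>2 + 4 * l\<^sup>2)"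
      using that by (simp add: power2_eq_square power4_eq_xxxx algebra_simps)
    also have "\<dots> = l\<^sup>2 * real_of_int (X\<^sup>2 + 2*m*Y + int q*Y\<^sup>2 + int q)"
      unfolding nm l4 by simp
    finally show ?thesis .
  qed
  show ?thesis
  proof
    assume "(x, y) \<in> calL_n q n"
    then have circ: "x\<^sup>2 + y\<^sup>2 = n\<^sup>2 - 4 * l^4"
      and "(y - n) / (2 * l\<^sup>2) \<in> \<int>" "x / l \<in> \<int>"
      by (simp_all add: calL_n_def l_def)
    then obtain X Y where X: "x / l = of_int X" and Y: "(y - n) / (2 * l\<^sup>2) = of_int Y"
      by (metis Ints_cases)
    have xX: "x = l * of_int X" and yY: "y = n + 2 * l\<^sup>2 * of_int Y"
      using X Y l0 by (simp_all add: field_simps)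
    have "real_of_int (X\<^sup>2 + 2*m*Y + int q*Y\<^sup>2 + int q) = 0"
      using key[OF xX yY] circ l0 by simp
    then show "\<exists>X Y. x = lam_q q * of_int X \<and> y = n + 2 * (lam_q q)\<^sup>2 * of_int Y
           \<and> X\<^sup>2 + 2*m*Y + int q*Y\<^sup>2 + int q = 0"
      using xX yY unfolding l_def of_int_eq_0_iff by blast
  next
    assume "\<exists>X Y. x = lam_q q * of_int X \<and> y = n + 2 * (lam_q q)\<^sup>2 * of_int Y
           \<and> X\<^sup>2 + 2*m*Y + int q*Y\<^sup>2 + int q = 0"
    then obtain X Y where xX: "x = l * of_int X" and yY: "y = n + 2 * l\<^sup>2 * of_int Y"
      and eq: "X\<^sup>2 + 2*m*Y + int q*Y\<^sup>2 + int q = 0"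
      unfolding l_def by blast
    have "x\<^sup>2 + y\<^sup>2 = n\<^sup>2 - 4 * l^4" using key[OF xX yY] eq by simp
    moreover have "(y - n) / (2 * l\<^sup>2) = of_int Y" "x / l = of_int X"
      using xX yY l0 by simp_all
    ultimately show "(x, y) \<in> calL_n q n" by (simp add: calL_n_def l_def)
  qed
qed

lemma L_n_subset_calL_n:
  assumes q: "q \<in> admissible_q"
  shows "L_n q n \<subseteq> calL_n q n"
proof
  fix p assume "p \<in> L_n q n"
  then obtain a b c d where g: "(a, b, c, d) \<in> SL2Z" and n: "RR q (a, b, c, d) = n"
    and p: "p = (x_g q (a, b, c, d), y_g q (a, b, c, d))"
    by (auto simp: L_n_def Gamma_n_def)
  obtain A B C where F: "form_act (principal_form q) (a, b, c, d) = (A, B, C)"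
    by (metis prod_cases3)
  define t where "t = tr_q q"
  define m where "m = 2 * nr_q q * C + 2 * A - t * B"
  have nm: "2 * n = of_int m"
    using RR_form_act[OF q F] g n by (simp add: SL2Z_def m_def t_def)
  have disc: "B\<^sup>2 - 4*A*C = - int q" using disc_form_act_principal[OF q g F] .
  have "(B - t*C)\<^sup>2 + 2*m*(-C) + int q*(-C)\<^sup>2 + int q
      = (B\<^sup>2 - 4*A*C + int q) + C\<^sup>2 * (int q - (4 * nr_q q - t\<^sup>2))"
    by (simp add: m_def power2_eq_square algebra_simps)
  also have "\<dots> = 0" using disc disc_nr_tr_q[OF q] by (simp add: t_def)
  finally have "(B - t*C)\<^sup>2 + 2*m*(-C) + int q*(-C)\<^sup>2 + int q = 0" .
  moreover have "x_g q (a, b, c, d) = lam_q q * of_int (B - t*C)"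
    using x_g_form_act[OF q F] by (simp add: t_def)
  moreover have "y_g q (a, b, c, d) = n + 2 * (lam_q q)\<^sup>2 * of_int (-C)"
    using y_g_form_act[OF q F] n by (simp add: lam_q_sq)
  ultimately show "p \<in> calL_n q n"
    using mem_calL_n_iff[OF admissible_q_pos[OF q] nm] p by blast
qed

lemma circle_solution_form:
  assumes q: "q \<in> admissible_q" and m0: "0 < m" and mpar: "even (m - tr_q q)"
    and eq: "X\<^sup>2 + 2*m*Y + int q*Y\<^sup>2 + int q = 0"
  obtains A B C where "0 < A" "0 < C" "C = -Y" "B = X + tr_q q * C" "B\<^sup>2 - 4*A*C = - int q"
    "2 * nr_q q * C + 2*A - tr_q q * B = m"
proof -
  define t where "t = tr_q q"
  define N where "N = nr_q q"
  have q0: "int q > 0" using admissible_q_pos[OF q] by simp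
  have qNt: "int q = 4*N - t\<^sup>2" using disc_nr_tr_q[OF q] by (simp add: N_def t_def)
  have "Y < 0"
  proof (rule ccontr)
    assume "\<not> Y < 0"
    then have "0 \<le> m*Y" using m0 by simp
    moreover have "0 \<le> X\<^sup>2" "0 \<le> int q*Y\<^sup>2" by simp_all
    ultimately show False using eq q0 by linarith
  qed
  define C where "C = -Y"
  define B where "B = X + t*C"
  define E where "E = m + t*X + (t\<^sup>2 - 2*N)*C"
  have "even E"
  proof (cases "t = 0")
    case True
    then show ?thesis using mpar by (simp add: E_def t_def)
  next
    case False
    then have t1: "t = 1" using tr_q_cases[of q] by (simp add: t_def)
    then have "odd (int q)" using odd_iff_tr_q[OF q] by (simp add: t_def)
    moreover have "even (X\<^sup>2 + 2*m*Y + int q*Y\<^sup>2 + int q)" using eq by simp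
    ultimately have "even (X + Y + 1)" by simp
    moreover have "odd m" using mpar t1 by (simp add: t_def)
    ultimately show ?thesis unfolding E_def C_def t1 by simp
  qed
  then obtain A where A: "E = 2*A" by (metis dvd_def)
  have disc: "B\<^sup>2 - 4*A*C = - int q"
  proof -
    have "B\<^sup>2 - 4*A*C = B\<^sup>2 - 2*E*C" using A by simp
    also have "\<dots> = X\<^sup>2 + 2*m*Y + (4*N - t\<^sup>2)*Y\<^sup>2"
      by (simp add: B_def E_def C_def algebra_simps power2_eq_square)
    finally show ?thesis using eq qNt by simp
  qed
  have "0 < C" using \<open>Y < 0\<close> by (simp add: C_def)
  moreover have "0 \<le> B\<^sup>2" by simp
  then have "0 < A*C" using disc q0 by linarith
  ultimately have "0 < A" by (simp add: zero_less_mult_iff)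
  moreover have "2*N*C + 2*A - t*B = m"
    using A[symmetric] by (simp add: E_def B_def algebra_simps power2_eq_square)
  ultimately show ?thesis using that disc \<open>0 < C\<close> B_def C_def unfolding N_def t_def by blast
qed

lemma calL_n_subset_L_n:
  assumes q: "q \<in> admissible_q" and nm: "2 * n = of_int m" and m0: "0 < m"
    and mpar: "even (m - tr_q q)"
  shows "calL_n q n \<subseteq> L_n q n"
proof
  fix p assume "p \<in> calL_n q n"
  then obtain x y X Y where p: "p = (x, y)"
    and xX: "x = lam_q q * of_int X" and yY: "y = n + 2 * (lam_q q)\<^sup>2 * of_int Y"
    and eq: "X\<^sup>2 + 2*m*Y + int q*Y\<^sup>2 + int q = 0"
    using mem_calL_n_iff[OF admissible_q_pos[OF q] nm] by (metis surj_pair)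
  obtain A B C where "0 < A" "0 < C" and CY: "C = -Y" and BX: "B = X + tr_q q * C"
    and disc: "B\<^sup>2 - 4*A*C = - int q" and Am: "2 * nr_q q * C + 2*A - tr_q q * B = m"
    by (rule circle_solution_form[OF q m0 mpar eq])
  obtain a b c d where g: "(a, b, c, d) \<in> SL2Z"
    and F: "form_act (principal_form q) (a, b, c, d) = (A, B, C)"
    using class_number_one[OF q \<open>0 < A\<close> disc] by (metis prod_cases4)
  have "2 * RR q (a, b, c, d) = of_int (2 * nr_q q * C + 2*A - tr_q q * B)"
    using RR_form_act[OF q F] g by (simp add: SL2Z_def)
  then have Rn: "RR q (a, b, c, d) = n" using nm Am by simp
  have "x_g q (a, b, c, d) = x"
    using x_g_form_act[OF q F] xX unfolding BX by simp
  moreover have "y_g q (a, b, c, d) = y"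
    using y_g_form_act[OF q F] Rn yY unfolding CY by (simp add: lam_q_sq)
  moreover have "(a, b, c, d) \<in> Gamma_n q n" using g Rn by (simp add: Gamma_n_def)
  ultimately show "p \<in> L_n q n" unfolding L_n_def p by force
qed

text \<open>The pair (a, b) stands for a + b z_q; the defining equation of norm_points is
  4 |a + b z_q|^2 = m^2 - q^2, i.e. norm n^2 - 4 lambda^4 for m = 2 n.\<close>

definition norm_points :: "nat \<Rightarrow> int \<Rightarrow> (int \<times> int) set" where
  "norm_points q m = {(a, b). (2*a + tr_q q * b)\<^sup>2 + int q * b\<^sup>2 = m\<^sup>2 - (int q)\<^sup>2}"

definition cong_points :: "nat \<Rightarrow> int \<Rightarrow> (int \<times> int) set" where
  "cong_points q m = {(a, b) \<in> norm_points q m. int q dvd 2*a + tr_q q * b - m}"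

definition circle_point :: "nat \<Rightarrow> real \<Rightarrow> int \<Rightarrow> int \<times> int \<Rightarrow> real \<times> real" where
  "circle_point q n m = (\<lambda>(a, b). (lam_q q * of_int b,
      n + 2 * (lam_q q)\<^sup>2 * of_int ((2*a + tr_q q * b - m) div int q)))"

lemma finite_norm_points:
  assumes "q > 0"
  shows "finite (norm_points q m)"
proof (rule finite_subset)
  show "norm_points q m \<subseteq> {-\<bar>m\<bar>..\<bar>m\<bar>} \<times> {-\<bar>m\<bar>..\<bar>m\<bar>}"
  proof
    fix p assume "p \<in> norm_points q m"
    then obtain a b where p: "p = (a, b)"
      and e: "(2*a + tr_q q * b)\<^sup>2 + int q * b\<^sup>2 = m\<^sup>2 - (int q)\<^sup>2"
      by (auto simp: norm_points_def)
    have "b\<^sup>2 \<le> int q * b\<^sup>2" using assms by (simp add: mult_le_cancel_right1)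
    also have "\<dots> \<le> m\<^sup>2" using e by (smt (verit) zero_le_power2)
    finally have b: "\<bar>b\<bar> \<le> \<bar>m\<bar>" using abs_le_square_iff by blast
    have "(2*a + tr_q q * b)\<^sup>2 \<le> m\<^sup>2" using e by (smt (verit) zero_le_power2 zero_le_mult_iff of_nat_0_le_iff)
    then have "\<bar>2*a + tr_q q * b\<bar> \<le> \<bar>m\<bar>" using abs_le_square_iff by blast
    moreover have "\<bar>tr_q q * b\<bar> \<le> \<bar>m\<bar>" using b tr_q_cases[of q] by auto
    ultimately have "\<bar>a\<bar> \<le> \<bar>m\<bar>" by linarith
    then show "p \<in> {-\<bar>m\<bar>..\<bar>m\<bar>} \<times> {-\<bar>m\<bar>..\<bar>m\<bar>}" using b p by auto
  qed
qed simp

lemma r_K_eq_card_norm_points: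
  assumes q0: "q > 0" and nm: "2 * n = of_int m"
  shows "r_K q (n\<^sup>2 - 4 * (lam_q q)^4) = card (norm_points q m)"
proof -
  define k where "k = (\<lambda>(a, b). of_int a + of_int b * z_q q :: complex)"
  have norm_k: "(cmod (k (a, b)))\<^sup>2 = real_of_int ((2*a + tr_q q * b)\<^sup>2 + int q * b\<^sup>2) / 4" for a b
  proof -
    have "(cmod (k (a, b)))\<^sup>2 = (of_int a + of_int b * of_int (tr_q q) / 2)\<^sup>2 + (of_int b * lam_q q)\<^sup>2"
      by (simp add: k_def z_q_eq cmod_power2)
    also have "\<dots> = real_of_int ((2*a + tr_q q * b)\<^sup>2 + int q * b\<^sup>2) / 4"
      using lam_q_sq[of q] by (simp add: power2_eq_square field_simps)
    finally show ?thesis .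
  qed
  have M: "n\<^sup>2 - 4 * (lam_q q)^4 = real_of_int (m\<^sup>2 - (int q)\<^sup>2) / 4"
  proof -
    have l4: "(lam_q q)^4 = (real q / 4)\<^sup>2" unfolding lam_q_sq[symmetric] by simp
    have nn: "n = of_int m / 2" using nm by simp
    show ?thesis unfolding l4 nn by (simp add: power2_eq_square field_simps)
  qed
  have norm_eq: "(cmod (k (a, b)))\<^sup>2 = n\<^sup>2 - 4 * (lam_q q)^4 \<longleftrightarrow> (a, b) \<in> norm_points q m" for a b
    unfolding norm_k M norm_points_def
    by (simp only: mem_Collect_eq prod.case) (metis divide_cancel_right of_int_eq_iff zero_neq_numeral)
  have "O_K q = range k" by (force simp: O_K_def k_def)
  then have "{\<alpha> \<in> O_K q. (cmod \<alpha>)\<^sup>2 = n\<^sup>2 - 4 * (lam_q q)^4} = k ` norm_points q m"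
    using norm_eq by auto
  moreover have "inj k"
  proof (rule injI)
    fix p p' assume "k p = k p'"
    then have "Im (k p) = Im (k p')" "Re (k p) = Re (k p')" by simp_all
    then show "p = p'" using lam_q_pos[OF q0] by (auto simp: k_def z_q_eq split: prod.splits)
  qed
  ultimately show ?thesis by (simp add: r_K_def card_image inj_on_subset)
qed

lemma calL_n_eq_image_cong_points:
  assumes q: "q \<in> admissible_q" and nm: "2 * n = of_int m" and mpar: "even (m - tr_q q)"
  shows "calL_n q n = circle_point q n m ` cong_points q m"
proof (rule set_eqI)
  fix p :: "real \<times> real"
  obtain x y where p: "p = (x, y)" by (metis prod.exhaust)
  define t where "t = tr_q q"
  have q0: "q > 0" using admissible_q_pos[OF q] .
  have circle_point: "circle_point q n m (a, b) = (lam_q q * of_int b, n + 2 * (lam_q q)\<^sup>2 * of_int Y)"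
    if "2*a + t*b - m = int q * Y" for a b Y
    using that q0 by (simp add: circle_point_def t_def)
  show "p \<in> calL_n q n \<longleftrightarrow> p \<in> circle_point q n m ` cong_points q m"
  proof
    assume "p \<in> calL_n q n"
    then obtain X Y where xX: "x = lam_q q * of_int X" and yY: "y = n + 2 * (lam_q q)\<^sup>2 * of_int Y"
      and eq: "X\<^sup>2 + 2*m*Y + int q*Y\<^sup>2 + int q = 0"
      using mem_calL_n_iff[OF q0 nm] p by blast
    have "even (m + int q*Y - t*X)"
    proof (cases "t = 0")
      case True
      then show ?thesis using mpar disc_nr_tr_q[OF q] by (simp add: t_def)
    next
      case False
      then have t1: "t = 1" using tr_q_cases[of q] by (simp add: t_def)
      then have oq: "odd (int q)" using odd_iff_tr_q[OF q] by (simp add: t_def)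
      have "even (X\<^sup>2 + 2*m*Y + int q*Y\<^sup>2 + int q)" using eq by simp
      then have "even (X + Y + 1)" using oq by simp
      moreover have "odd m" using mpar t1 by (simp add: t_def)
      ultimately show ?thesis unfolding t1 using oq by simp
    qed
    then obtain a where a: "m + int q*Y - t*X = 2*a" by (metis dvd_def)
    then have u: "2*a + t*X - m = int q * Y" by simp
    have "(2*a + t*X)\<^sup>2 + int q*X\<^sup>2 = (m + int q*Y)\<^sup>2 + int q*X\<^sup>2"
      using u by (simp add: algebra_simps)
    also have "\<dots> = m\<^sup>2 + int q * (X\<^sup>2 + 2*m*Y + int q*Y\<^sup>2)"
      by (simp add: algebra_simps power2_eq_square)
    also have "X\<^sup>2 + 2*m*Y + int q*Y\<^sup>2 = - int q" using eq by simp
    finally have "(2*a + t*X)\<^sup>2 + int q*X\<^sup>2 = m\<^sup>2 - (int q)\<^sup>2"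
      by (simp add: power2_eq_square)
    then have "(a, X) \<in> cong_points q m" using u by (simp add: cong_points_def norm_points_def t_def)
    moreover have "circle_point q n m (a, X) = (x, y)" using circle_point[OF u] xX yY by simp
    ultimately show "p \<in> circle_point q n m ` cong_points q m" using p by force
  next
    assume "p \<in> circle_point q n m ` cong_points q m"
    then obtain a b where ab: "(a, b) \<in> cong_points q m" and hp: "p = circle_point q n m (a, b)" by auto
    then obtain Y where Y: "2*a + t*b - m = int q * Y"
      and T: "(2*a + t*b)\<^sup>2 + int q*b\<^sup>2 = m\<^sup>2 - (int q)\<^sup>2"
      by (auto simp: cong_points_def norm_points_def t_def elim!: dvdE)
    have "int q * (b\<^sup>2 + 2*m*Y + int q*Y\<^sup>2 + int q) = (2*a + t*b)\<^sup>2 + int q*b\<^sup>2 - m\<^sup>2 + (int q)\<^sup>2"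
      using Y by (simp add: algebra_simps power2_eq_square)
    then have "b\<^sup>2 + 2*m*Y + int q*Y\<^sup>2 + int q = 0" using T q0 by simp
    then show "p \<in> calL_n q n" using mem_calL_n_iff[OF q0 nm] hp circle_point[OF Y] by auto
  qed
qed

lemma inj_on_circle_point:
  assumes "q > 0"
  shows "inj_on (circle_point q n m) (cong_points q m)"
proof (rule inj_onI)
  fix p p' assume p: "p \<in> cong_points q m" and p': "p' \<in> cong_points q m"
    and e: "circle_point q n m p = circle_point q n m p'"
  obtain a b a' b' where ab: "p = (a, b)" "p' = (a', b')" by (metis prod.exhaust)
  from p p' obtain Y Y' where Y: "2*a + tr_q q*b - m = int q * Y" "2*a' + tr_q q*b' - m = int q * Y'"
    unfolding ab by (auto simp: cong_points_def elim!: dvdE)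
  have "lam_q q * of_int b = lam_q q * of_int b'" "2 * (lam_q q)\<^sup>2 * of_int Y = 2 * (lam_q q)\<^sup>2 * of_int Y'"
    using e assms unfolding ab circle_point_def by (simp_all add: Y)
  then have "b = b'" "Y = Y'" using lam_q_pos[OF assms] by simp_all
  then show "p = p'" using ab Y by simp
qed

lemma card_eq_twice_by_involution:
  assumes "finite T" and "P \<subseteq> T" and "\<And>x. x \<in> P \<Longrightarrow> s x \<in> T - P"
    and "\<And>x. x \<in> T - P \<Longrightarrow> s x \<in> P" and "\<And>x. x \<in> T \<Longrightarrow> s (s x) = x"
  shows "card T = 2 * card P"
proof -
  have "bij_betw s P (T - P)"
    by (rule bij_betw_byWitness[where f' = s]) (use assms in auto)
  then have "card (T - P) = card P" by (simp add: bij_betw_same_card)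
  moreover have "card T = card P + card (T - P)"
    using assms(1,2) by (metis card_Diff_subset card_mono finite_subset le_add_diff_inverse)
  ultimately show ?thesis by simp
qed

lemma prime_admissible_q_odd:
  assumes q: "q \<in> admissible_q" and "odd q"
  shows "prime (int q)"
proof -
  have "prime (3::nat)" "prime (7::nat)" "prime (11::nat)" "prime (19::nat)" "prime (43::nat)"
    "prime (67::nat)" "prime (163::nat)"
    by (unfold prime_nat_iff' set_upt[symmetric]; simp add: upt_rec_numeral)+
  then show ?thesis using admissible_q_cases[OF q] \<open>odd q\<close> by auto
qed

context
  fixes q :: nat and m :: int
  assumes q: "q \<in> admissible_q" and odd_q: "odd q"
begin

private lemma tr_q_odd: "tr_q q = 1"
  using odd_iff_tr_q[OF q] odd_q by simp

text \<open>For odd q the norm equation says (2a + b - m)(2a + b + m) = -q (b^2 + q), so the prime q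
  divides one of the two factors; the involution (a, b) \<mapsto> (-a - b, b), i.e. a + b z_q
  \<mapsto> -(a + b conj z_q), exchanges them.\<close>

private lemma prime_divides_factor:
  assumes "(a, b) \<in> norm_points q m"
  shows "int q dvd 2*a + b - m \<or> int q dvd 2*a + b + m"
proof -
  have "(2*a + b)\<^sup>2 + int q*b\<^sup>2 = m\<^sup>2 - (int q)\<^sup>2" using assms tr_q_odd by (simp add: norm_points_def)
  then have "(2*a + b - m) * (2*a + b + m) = int q * (- b\<^sup>2 - int q)"
    by (simp add: algebra_simps power2_eq_square)
  then show ?thesis using prime_admissible_q_odd[OF q odd_q] by (metis dvd_triv_left prime_dvd_mult_iff)
qed

private lemma not_dvd_two: "\<not> int q dvd 2"
proof
  assume "int q dvd 2"
  then have "int q dvd int 2" by simp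
  then have "q \<le> 2" by (simp only: int_dvd_int_iff) (simp add: dvd_imp_le)
  then show False using admissible_q_cases[OF q] by auto
qed

lemma cong_points_eq_norm_points_odd:
  assumes "int q dvd m"
  shows "cong_points q m = norm_points q m"
proof -
  have "int q dvd 2*a + b - m" if "(a, b) \<in> norm_points q m" for a b
    using prime_divides_factor[OF that]
  proof
    assume "int q dvd 2*a + b + m"
    moreover have "int q dvd 2*m" using assms by simp
    ultimately have "int q dvd (2*a + b + m) - 2*m" by (rule dvd_diff)
    then show ?thesis by (simp add: algebra_simps)
  qed
  then show ?thesis by (auto simp: cong_points_def tr_q_odd)
qed

lemma card_norm_points_odd:
  assumes "\<not> int q dvd m"
  shows "card (norm_points q m) = 2 * card (cong_points q m)"
proof (rule card_eq_twice_by_involution[where s = "\<lambda>(a, b). (-a - b, b)"])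
  have norm: "(-a - b, b) \<in> norm_points q m" if "(a, b) \<in> norm_points q m" for a b
    using that tr_q_odd by (simp add: norm_points_def power2_eq_square algebra_simps)
  have swap: "int q dvd 2*(-a - b) + b - m \<longleftrightarrow> int q dvd 2*a + b + m" for a b
  proof -
    have "2*(-a - b) + b - m = - (2*a + b + m)" by simp
    then show ?thesis by (simp only: dvd_minus_iff)
  qed
  have excl: "\<not> (int q dvd 2*a + b - m \<and> int q dvd 2*a + b + m)" for a b
  proof
    assume "int q dvd 2*a + b - m \<and> int q dvd 2*a + b + m"
    then have "int q dvd (2*a + b + m) - (2*a + b - m)" by (blast intro: dvd_diff)
    moreover have "(2*a + b + m) - (2*a + b - m) = 2 * m" by simp
    ultimately have "int q dvd 2 * m" by simp
    then show False using prime_admissible_q_odd[OF q odd_q] not_dvd_two assms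
      by (simp add: prime_dvd_mult_iff)
  qed
  show "finite (norm_points q m)" using finite_norm_points admissible_q_pos[OF q] by blast
  show "cong_points q m \<subseteq> norm_points q m" by (auto simp: cong_points_def)
  show "(\<lambda>(a, b). (-a - b, b)) x \<in> norm_points q m - cong_points q m" if "x \<in> cong_points q m" for x
    using that norm swap excl by (auto simp: cong_points_def tr_q_odd)
  show "(\<lambda>(a, b). (-a - b, b)) x \<in> cong_points q m" if "x \<in> norm_points q m - cong_points q m" for x
  proof -
    obtain a b where x: "x = (a, b)" by fastforce
    then have ab: "(a, b) \<in> norm_points q m" "\<not> int q dvd 2*a + b - m"
      using that by (auto simp: cong_points_def tr_q_odd)
    then have "int q dvd 2*a + b + m" using prime_divides_factor by blast
    then show ?thesis using norm[OF ab(1)] swap x by (simp add: cong_points_def tr_q_odd)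
  qed
  show "(\<lambda>(a, b). (-a - b, b)) ((\<lambda>(a, b). (-a - b, b)) x) = x" for x :: "int \<times> int"
    by (cases x) simp
qed

end

text \<open>For q = 4 write m = 2k. If k is even, a and b cannot both be odd, so every point satisfies
  the congruence; if k is odd exactly one of a, b is even and the swap (a, b) \<mapsto> (b, a), i.e.
  multiplication of the conjugate by i, exchanges the two kinds of points.\<close>

context
  fixes m k :: int
  assumes mk: "m = 2*k"
begin

lemma mem_norm_points_4_iff: "(a, b) \<in> norm_points 4 m \<longleftrightarrow> a\<^sup>2 + b\<^sup>2 = k\<^sup>2 - 4"
proof -
  have "(a, b) \<in> norm_points 4 m \<longleftrightarrow> 4*(a\<^sup>2 + b\<^sup>2) = 4*(k\<^sup>2 - 4)"
    by (simp add: norm_points_def tr_q_def mk power2_eq_square algebra_simps)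
  then show ?thesis by (metis mult_cancel_left zero_neq_numeral)
qed

lemma mem_cong_points_4_iff:
  "(a, b) \<in> cong_points 4 m \<longleftrightarrow> (a, b) \<in> norm_points 4 m \<and> even (a - k)"
proof -
  have "(4::int) dvd 2*a - 2*k \<longleftrightarrow> even (a - k)" by presburger
  then show ?thesis by (simp add: cong_points_def tr_q_def mk)
qed

lemma cong_points_eq_norm_points_4:
  assumes "even k"
  shows "cong_points 4 m = norm_points 4 m"
proof -
  obtain h where kh: "k = 2*h" using assms by (rule evenE)
  have "even a" if e: "a\<^sup>2 + b\<^sup>2 = k\<^sup>2 - 4" for a b
  proof (rule ccontr)
    assume "odd a"
    moreover have "even (a\<^sup>2 + b\<^sup>2)" using e kh by simp
    ultimately have "odd b" by simp
    obtain i j where "a = 2*i + 1" "b = 2*j + 1" using \<open>odd a\<close> \<open>odd b\<close> by (metis oddE)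
    then have "4 * (h\<^sup>2 - 1 - i\<^sup>2 - i - j\<^sup>2 - j) = 2" using e unfolding kh
      by (simp add: algebra_simps power2_eq_square)
    moreover have "(4::int) * w \<noteq> 2" for w by presburger
    ultimately show False by blast
  qed
  then show ?thesis using mem_cong_points_4_iff mem_norm_points_4_iff kh by auto
qed

lemma card_norm_points_4:
  assumes "odd k"
  shows "card (norm_points 4 m) = 2 * card (cong_points 4 m)"
proof (rule card_eq_twice_by_involution[where s = "\<lambda>(a, b). (b, a)"])
  have par: "even a \<longleftrightarrow> odd b" if "(a, b) \<in> norm_points 4 m" for a b
  proof -
    have "odd (a\<^sup>2 + b\<^sup>2)" using that mem_norm_points_4_iff assms by simp
    then show ?thesis by simp
  qed
  have swap: "(b, a) \<in> norm_points 4 m" if "(a, b) \<in> norm_points 4 m" for a b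
    using that mem_norm_points_4_iff by (simp add: algebra_simps)
  show "finite (norm_points 4 m)" by (rule finite_norm_points) simp
  show "cong_points 4 m \<subseteq> norm_points 4 m" by (auto simp: cong_points_def)
  show "(\<lambda>(a, b). (b, a)) x \<in> norm_points 4 m - cong_points 4 m" if "x \<in> cong_points 4 m" for x
  proof -
    obtain a b where x: "x = (a, b)" by fastforce
    then have "(a, b) \<in> norm_points 4 m" "even (a - k)" using that mem_cong_points_4_iff by auto
    then have "(b, a) \<in> norm_points 4 m" "odd (b - k)" using par swap assms by auto
    then show ?thesis using x mem_cong_points_4_iff by auto
  qed
  show "(\<lambda>(a, b). (b, a)) x \<in> cong_points 4 m" if "x \<in> norm_points 4 m - cong_points 4 m" for x
  proof -
    obtain a b where x: "x = (a, b)" by fastforce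
    then have "(a, b) \<in> norm_points 4 m" "odd (a - k)" using that mem_cong_points_4_iff by auto
    then have "(b, a) \<in> norm_points 4 m" "even (b - k)" using par swap assms by auto
    then show ?thesis using x mem_cong_points_4_iff by auto
  qed
  show "(\<lambda>(a, b). (b, a)) ((\<lambda>(a, b). (b, a)) x) = x" for x :: "int \<times> int"
    by (cases x) simp
qed

text \<open>For q = 8 write m = 2k. If k = 2h is even then a = 2i, b = 2j with i^2 + 2j^2 = h^2 - 4,
  forcing i \<equiv> h (mod 2); if k is odd then a is odd and a \<mapsto> -a exchanges a \<equiv> k and
  a \<equiv> -k (mod 4).\<close>

lemma mem_norm_points_8_iff: "(a, b) \<in> norm_points 8 m \<longleftrightarrow> a\<^sup>2 + 2*b\<^sup>2 = k\<^sup>2 - 16"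
proof -
  have "(a, b) \<in> norm_points 8 m \<longleftrightarrow> 4*(a\<^sup>2 + 2*b\<^sup>2) = 4*(k\<^sup>2 - 16)"
    by (simp add: norm_points_def tr_q_def mk power2_eq_square algebra_simps)
  then show ?thesis by (metis mult_cancel_left zero_neq_numeral)
qed

lemma mem_cong_points_8_iff:
  "(a, b) \<in> cong_points 8 m \<longleftrightarrow> (a, b) \<in> norm_points 8 m \<and> 4 dvd (a - k)"
proof -
  have "(8::int) dvd 2*a - 2*k \<longleftrightarrow> 4 dvd (a - k)" by presburger
  then show ?thesis by (simp add: cong_points_def tr_q_def mk)
qed

lemma cong_points_eq_norm_points_8:
  assumes "even k"
  shows "cong_points 8 m = norm_points 8 m"
proof -
  obtain h where kh: "k = 2*h" using assms by (rule evenE)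
  have "4 dvd (a - k)" if e: "a\<^sup>2 + 2*b\<^sup>2 = k\<^sup>2 - 16" for a b
  proof -
    have "even (a\<^sup>2 + 2*b\<^sup>2)" using e kh by simp
    then have "even a" by simp
    then obtain i where i: "a = 2*i" by (rule evenE)
    have "b\<^sup>2 = 2*(h\<^sup>2 - 4 - i\<^sup>2)" using e unfolding i kh by (simp add: algebra_simps power2_eq_square)
    then have "even (b\<^sup>2)" by simp
    then have "even b" by simp
    then obtain j where j: "b = 2*j" by (rule evenE)
    have "i\<^sup>2 + 2*j\<^sup>2 = h\<^sup>2 - 4" using e unfolding i j kh by (simp add: algebra_simps power2_eq_square)
    then have "even (i\<^sup>2 + 2*j\<^sup>2) \<longleftrightarrow> even (h\<^sup>2 - 4)" by simp
    then have "even i \<longleftrightarrow> even h" by simp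
    then show ?thesis unfolding i kh by presburger
  qed
  then show ?thesis using mem_cong_points_8_iff mem_norm_points_8_iff by auto
qed

lemma card_norm_points_8:
  assumes "odd k"
  shows "card (norm_points 8 m) = 2 * card (cong_points 8 m)"
proof (rule card_eq_twice_by_involution[where s = "\<lambda>(a, b). (-a, b)"])
  have odd_a: "odd a" if "(a, b) \<in> norm_points 8 m" for a b
  proof -
    have "odd (a\<^sup>2 + 2*b\<^sup>2)" using that mem_norm_points_8_iff assms by simp
    then show ?thesis by simp
  qed
  have swap: "4 dvd (a - k) \<longleftrightarrow> \<not> 4 dvd (-a - k)" if "odd a" for a
    using that assms by presburger
  have neg: "(-a, b) \<in> norm_points 8 m" if "(a, b) \<in> norm_points 8 m" for a b
    using that mem_norm_points_8_iff by simp
  show "finite (norm_points 8 m)" by (rule finite_norm_points) simp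
  show "cong_points 8 m \<subseteq> norm_points 8 m" by (auto simp: cong_points_def)
  show "(\<lambda>(a, b). (-a, b)) x \<in> norm_points 8 m - cong_points 8 m" if "x \<in> cong_points 8 m" for x
  proof -
    obtain a b where x: "x = (a, b)" by fastforce
    then have "(a, b) \<in> norm_points 8 m" "4 dvd (a - k)" using that mem_cong_points_8_iff by auto
    then have "(-a, b) \<in> norm_points 8 m" "\<not> 4 dvd (-a - k)" using odd_a swap neg by blast+
    then show ?thesis using x mem_cong_points_8_iff by auto
  qed
  show "(\<lambda>(a, b). (-a, b)) x \<in> cong_points 8 m" if "x \<in> norm_points 8 m - cong_points 8 m" for x
  proof -
    obtain a b where x: "x = (a, b)" by fastforce
    then have "(a, b) \<in> norm_points 8 m" "\<not> 4 dvd (a - k)" using that mem_cong_points_8_iff by auto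
    then have "(-a, b) \<in> norm_points 8 m" "4 dvd (-a - k)" using odd_a swap neg by blast+
    then show ?thesis using x mem_cong_points_8_iff by auto
  qed
  show "(\<lambda>(a, b). (-a, b)) ((\<lambda>(a, b). (-a, b)) x) = x" for x :: "int \<times> int"
    by (cases x) simp
qed

end

lemma of_int_divide_in_Ints_iff:
  fixes m k :: int
  assumes "k \<noteq> 0"
  shows "real_of_int m / real_of_int k \<in> \<int> \<longleftrightarrow> k dvd m"
proof
  assume "real_of_int m / real_of_int k \<in> \<int>"
  then obtain j where "real_of_int m / real_of_int k = of_int j" by (metis Ints_cases)
  then have "real_of_int m = real_of_int (k * j)" using assms by (simp add: field_simps)
  then show "k dvd m" by (simp only: of_int_eq_iff) simp
qed (use assms in \<open>simp add: of_int_divide_in_Ints\<close>)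

lemma c_n_eq:
  assumes "q > 0" and "2 * n = of_int m"
  shows "c_n q n = (if (even q \<and> 4 dvd m) \<or> (odd q \<and> int q dvd m) then 1/2 else 1/4)"
proof -
  have "n / 2 = real_of_int m / real_of_int 4" using assms(2) by simp
  then have half: "n / 2 \<in> \<int> \<longleftrightarrow> 4 dvd m"
    using of_int_divide_in_Ints_iff[of 4 m] by (simp only:)
  have "2 * n / real q = real_of_int m / real_of_int (int q)" using assms(2) by simp
  then have "2 * n / real q \<in> \<int> \<longleftrightarrow> int q dvd m"
    using of_int_divide_in_Ints_iff[of "int q" m] assms(1) by (simp only:)
  then show ?thesis unfolding c_n_def half by simp
qed

lemma card_cong_points:
  assumes q: "q \<in> admissible_q" and nm: "2 * n = of_int m" and mpar: "even (m - tr_q q)"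
  shows "real (card (cong_points q m)) = 2 * c_n q n * real (card (norm_points q m))"
proof (cases "odd q")
  case True
  then show ?thesis
    using cong_points_eq_norm_points_odd[OF q True] card_norm_points_odd[OF q True]
    by (simp add: c_n_eq[OF admissible_q_pos[OF q] nm])
next
  case False
  then have "q = 4 \<or> q = 8" using admissible_q_cases[OF q] by auto
  moreover have "tr_q q = 0" using False odd_iff_tr_q[OF q] tr_q_cases[of q] by auto
  then obtain k where k: "m = 2*k" using mpar by (auto elim: evenE)
  moreover have "4 dvd m \<longleftrightarrow> even k" using k by presburger
  ultimately show ?thesis
    using cong_points_eq_norm_points_4[OF k] card_norm_points_4[OF k]
      cong_points_eq_norm_points_8[OF k] card_norm_points_8[OF k] False
    by (auto simp: c_n_eq[OF admissible_q_pos[OF q] nm])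
qed

theorem proposition2p6:
  fixes q :: nat and n :: real
  assumes "q \<in> admissible_q"
    and "n \<in> N_z q"
  shows "L_n q n = calL_n q n \<and> finite (calL_n q n)
    \<and> real (card (calL_n q n)) = 2 * c_n q n * real (r_K q (n\<^sup>2 - 4 * (lam_q q)^4))"
proof -
  note q = assms(1) and q0 = admissible_q_pos[OF assms(1)]
  obtain m where nm: "2 * n = of_int m" and "0 < m" and mpar: "even (m - tr_q q)"
    using level_of_N_z[OF assms] .
  have "L_n q n = calL_n q n"
    using L_n_subset_calL_n[OF q] calL_n_subset_L_n[OF q nm \<open>0 < m\<close> mpar] by blast
  moreover have calL: "calL_n q n = circle_point q n m ` cong_points q m"
    using calL_n_eq_image_cong_points[OF q nm mpar] .
  moreover have "finite (cong_points q m)"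
    using finite_norm_points[OF q0] by (rule finite_subset[rotated]) (auto simp: cong_points_def)
  moreover have "card (calL_n q n) = card (cong_points q m)"
    unfolding calL using card_image[OF inj_on_circle_point[OF q0]] .
  ultimately show ?thesis
    using card_cong_points[OF q nm mpar] r_K_eq_card_norm_points[OF q0 nm] by simp
qed

end
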